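(* Let $\beta>1$ and $l\in(-1,0]$, put $r=l+1$, and let $T$ be the $(-\beta,l)$-transformation of $[l,r)$. Let $\mathrm{Fin}(-\beta,l)$ be the set of $x\in[l,r)$ whose $(-\beta,l)$-expansion $d(x)$ ends in $0^\omega$ (equivalently, $T^n(x)=0$ for some $n\in\mathbb{N}$). Then $\mathrm{Fin}(-\beta,l)\neq\{0\}$ if and only if $-\frac{1}{\beta}\in[l,r)$ or $\frac{1}{\beta}\in[l,r)$.
   Context: For $\beta>1$ and $l\in(-1,0]$, $r=l+1$, the $(-\beta,l)$-transformation is $T:[l,r)\to[l,r)$, $T(x)=-\beta x-\lfloor -\beta x-l\rfloor$. The $(-\beta,l)$-expansion of $x\in[l,r)$ is the integer sequence $d(x)=x_1x_2x_3\cdots$ with $x_i=\lfloor -\beta T^{i-1}(x)-l\rfloor$ for $i\ge1$; one has $x=\sum_{i\ge1}x_i(-\beta)^{-i}$. *)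

theory Defs
  imports Complex_Main
begin

definition negbeta_T :: "real \<Rightarrow> real \<Rightarrow> real \<Rightarrow> real" where
  "negbeta_T \<beta> l x = - \<beta> * x - of_int \<lfloor>- \<beta> * x - l\<rfloor>"

text \<open>The (-beta,l)-expansion d(x) = x_1 x_2 ..., indexed from 1:
  x_i = floor(-beta T^(i-1)(x) - l).\<close>
definition negbeta_digit :: "real \<Rightarrow> real \<Rightarrow> real \<Rightarrow> nat \<Rightarrow> int" where
  "negbeta_digit \<beta> l x i = \<lfloor>- \<beta> * ((negbeta_T \<beta> l ^^ (i - 1)) x) - l\<rfloor>"

definition negbeta_Fin :: "real \<Rightarrow> real \<Rightarrow> real set" where
  "negbeta_Fin \<beta> l = {x. l \<le> x \<and> x < l + 1 \<and>
      (\<exists>N\<ge>1. \<forall>i\<ge>N. negbeta_digit \<beta> l x i = 0)}"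

end

theory Submission
  imports Defs
begin

text \<open>For \<open>l \<in> (-1,0]\<close> a point is mapped to \<open>0\<close> exactly when \<open>-\<beta>x\<close> is an integer,
  and a zero digit means that \<open>T\<close> acts as multiplication by \<open>-\<beta>\<close>. Hence once the digits
  vanish the orbit grows geometrically inside the bounded interval \<open>[l,r)\<close>, so it must
  have reached \<open>0\<close>; thus a nonzero element of \<open>Fin(-\<beta>,l)\<close> yields a nonzero point
  \<open>z = k/\<beta>\<close> of \<open>[l,r)\<close> with \<open>k \<in> \<int>\<close>, and since the interval contains \<open>0\<close> it then
  contains \<open>-1/\<beta>\<close> or \<open>1/\<beta>\<close>.\<close>

lemma negbeta_T_in_interval: "negbeta_T \<beta> l x \<in> {l..<l + 1}"
  unfolding negbeta_T_def by simp linarith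

lemma funpow_negbeta_T_in_interval:
  "x \<in> {l..<l + 1} \<Longrightarrow> (negbeta_T \<beta> l ^^ n) x \<in> {l..<l + 1}"
  by (cases n) (simp_all add: negbeta_T_in_interval[unfolded atLeastLessThan_iff])

lemma negbeta_T_eq_0_iff:
  assumes "-1 < l" "l \<le> 0"
  shows "negbeta_T \<beta> l x = 0 \<longleftrightarrow> - \<beta> * x \<in> \<int>"
proof
  assume "negbeta_T \<beta> l x = 0"
  then show "- \<beta> * x \<in> \<int>"
    unfolding negbeta_T_def by (metis Ints_of_int eq_iff_diff_eq_0)
next
  assume "- \<beta> * x \<in> \<int>"
  then obtain k where k: "- \<beta> * x = of_int k" by (metis Ints_cases)
  have "\<lfloor>of_int k - l\<rfloor> = k" using assms by (simp add: floor_eq_iff)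
  then show "negbeta_T \<beta> l x = 0" unfolding negbeta_T_def k by simp
qed

lemma negbeta_T_eq_0_iff_int_divide:
  assumes "-1 < l" "l \<le> 0" "\<beta> \<noteq> 0"
  shows "negbeta_T \<beta> l z = 0 \<longleftrightarrow> (\<exists>k::int. z = of_int k / \<beta>)"
proof -
  have "- \<beta> * z = of_int m \<longleftrightarrow> z = of_int (- m) / \<beta>" for m
    using assms(3) by (auto simp: field_simps)
  then show ?thesis
    unfolding negbeta_T_eq_0_iff[OF assms(1,2)] Ints_def by (metis rangeE rangeI minus_minus)
qed

lemma funpow_negbeta_T_0:
  assumes "-1 < l" "l \<le> 0"
  shows "(negbeta_T \<beta> l ^^ n) 0 = 0"
  by (induction n) (simp_all add: negbeta_T_eq_0_iff[OF assms])

lemma funpow_Suc_negbeta_T_if_digit_0: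
  assumes "negbeta_digit \<beta> l x (Suc n) = 0"
  shows "(negbeta_T \<beta> l ^^ Suc n) x = - \<beta> * (negbeta_T \<beta> l ^^ n) x"
  using assms unfolding negbeta_digit_def negbeta_T_def by simp

lemma eq_0_if_power_mult_bounded:
  fixes \<beta> y C :: real
  assumes "1 < \<beta>" and "\<And>k. \<beta> ^ k * \<bar>y\<bar> < C"
  shows "y = 0"
proof (rule ccontr)
  assume "y \<noteq> 0"
  obtain k where "C / \<bar>y\<bar> < \<beta> ^ k" using real_arch_pow[OF assms(1)] by blast
  with \<open>y \<noteq> 0\<close> have "C < \<beta> ^ k * \<bar>y\<bar>" by (simp add: field_simps)
  with assms(2)[of k] show False by simp
qed

lemma negbeta_Fin_eq:
  assumes "1 < \<beta>" "-1 < l" "l \<le> 0"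
  shows "negbeta_Fin \<beta> l = {x \<in> {l..<l + 1}. \<exists>n. (negbeta_T \<beta> l ^^ n) x = 0}"
proof (intro set_eqI iffI)
  let ?T = "negbeta_T \<beta> l"
  fix x
  assume "x \<in> negbeta_Fin \<beta> l"
  then obtain N where x: "x \<in> {l..<l + 1}" and "N \<ge> 1"
    and digits: "\<forall>i\<ge>N. negbeta_digit \<beta> l x i = 0"
    unfolding negbeta_Fin_def by auto
  define y where "y = (?T ^^ (N - 1)) x"
  have orbit: "(?T ^^ (N - 1 + k)) x = (- \<beta>) ^ k * y" for k
  proof (induction k)
    case (Suc k)
    have "negbeta_digit \<beta> l x (Suc (N - 1 + k)) = 0" using digits \<open>N \<ge> 1\<close> by simp
    from funpow_Suc_negbeta_T_if_digit_0[OF this] show ?case using Suc by simp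
  qed (simp add: y_def)
  have "\<beta> ^ k * \<bar>y\<bar> < 2" for k
  proof -
    have "\<bar>(- \<beta>) ^ k * y\<bar> < 2"
      using funpow_negbeta_T_in_interval[OF x, where \<beta>=\<beta> and n="N - 1 + k"] assms(2,3)
      unfolding orbit by (auto simp: abs_less_iff)
    then show ?thesis using assms(1) by (simp add: abs_mult power_abs)
  qed
  then have "y = 0" using eq_0_if_power_mult_bounded[OF assms(1)] by blast
  with x show "x \<in> {x \<in> {l..<l + 1}. \<exists>n. (?T ^^ n) x = 0}" unfolding y_def by blast
next
  let ?T = "negbeta_T \<beta> l"
  fix x
  assume "x \<in> {x \<in> {l..<l + 1}. \<exists>n. (?T ^^ n) x = 0}"
  then obtain n where x: "x \<in> {l..<l + 1}" and n: "(?T ^^ n) x = 0" by blast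
  have "negbeta_digit \<beta> l x i = 0" if "i \<ge> Suc n" for i
  proof -
    have "i - 1 = (i - 1 - n) + n" using that by simp
    then have "(?T ^^ (i - 1)) x = (?T ^^ (i - 1 - n)) ((?T ^^ n) x)"
      by (metis funpow_add o_apply)
    then have "(?T ^^ (i - 1)) x = 0" by (simp add: n funpow_negbeta_T_0[OF assms(2,3)])
    then show ?thesis unfolding negbeta_digit_def using assms(2,3) by (simp add: floor_eq_iff)
  qed
  with x show "x \<in> negbeta_Fin \<beta> l" unfolding negbeta_Fin_def by auto
qed

lemma negbeta_Fin_neq_0_iff:
  assumes "1 < \<beta>" "-1 < l" "l \<le> 0"
  shows "negbeta_Fin \<beta> l \<noteq> {0} \<longleftrightarrow>
    (\<exists>z \<in> {l..<l + 1}. z \<noteq> 0 \<and> negbeta_T \<beta> l z = 0)"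
proof
  let ?T = "negbeta_T \<beta> l"
  have "0 \<in> negbeta_Fin \<beta> l"
    using assms by (auto simp: negbeta_Fin_eq intro: exI[of _ 0])
  moreover assume "negbeta_Fin \<beta> l \<noteq> {0}"
  ultimately obtain x n where x: "x \<in> {l..<l + 1}" "x \<noteq> 0" and n: "(?T ^^ n) x = 0"
    by (auto simp: negbeta_Fin_eq[OF assms])
  obtain m where "(?T ^^ m) x \<noteq> 0" "(?T ^^ Suc m) x = 0"
    using ex_least_nat_less[of "\<lambda>n. (?T ^^ n) x = 0", OF n] x(2) by auto
  then show "\<exists>z \<in> {l..<l + 1}. z \<noteq> 0 \<and> ?T z = 0"
    using funpow_negbeta_T_in_interval[OF x(1)] by auto
next
  assume "\<exists>z \<in> {l..<l + 1}. z \<noteq> 0 \<and> negbeta_T \<beta> l z = 0"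
  then obtain z where "z \<in> {l..<l + 1}" "z \<noteq> 0" "negbeta_T \<beta> l z = 0" by blast
  then have "z \<in> negbeta_Fin \<beta> l" by (auto simp: negbeta_Fin_eq[OF assms] intro!: exI[of _ 1])
  with \<open>z \<noteq> 0\<close> show "negbeta_Fin \<beta> l \<noteq> {0}" by blast
qed

lemma ex_nonzero_int_divide_in_interval_iff:
  fixes \<beta> a b :: real
  assumes "0 < \<beta>" "a \<le> 0" "0 < b"
  shows "(\<exists>k::int. k \<noteq> 0 \<and> of_int k / \<beta> \<in> {a..<b}) \<longleftrightarrow>
    -1/\<beta> \<in> {a..<b} \<or> 1/\<beta> \<in> {a..<b}"
proof
  assume "\<exists>k::int. k \<noteq> 0 \<and> of_int k / \<beta> \<in> {a..<b}"
  then obtain k :: int where "k \<noteq> 0" and k: "a \<le> of_int k / \<beta>" "of_int k / \<beta> < b" by auto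
  then have "k \<le> -1 \<or> 1 \<le> k" by linarith
  then have "of_int k \<le> (-1::real) \<or> 1 \<le> (of_int k :: real)"
    by (metis of_int_le_iff of_int_minus of_int_1)
  then consider "of_int k / \<beta> \<le> -1/\<beta>" | "1/\<beta> \<le> of_int k / \<beta>"
    using assms(1) by (auto simp: field_simps)
  \<comment> \<open>\<open>{a..<b}\<close> contains \<open>0\<close>, hence everything between \<open>0\<close> and \<open>k/\<beta>\<close>\<close>
  then show "-1/\<beta> \<in> {a..<b} \<or> 1/\<beta> \<in> {a..<b}"
  proof cases
    case 1
    have "-1/\<beta> < 0" using assms(1) by simp
    then have "a \<le> -1/\<beta>" "-1/\<beta> < b" using 1 k assms(3) by linarith+
    then show ?thesis by simp
  next
    case 2
    have "0 < 1/\<beta>" using assms(1) by simp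
    then have "a \<le> 1/\<beta>" "1/\<beta> < b" using 2 k assms(2) by linarith+
    then show ?thesis by simp
  qed
next
  assume "-1/\<beta> \<in> {a..<b} \<or> 1/\<beta> \<in> {a..<b}"
  then show "\<exists>k::int. k \<noteq> 0 \<and> of_int k / \<beta> \<in> {a..<b}"
    by (metis of_int_1 of_int_minus one_neq_zero neg_equal_0_iff_equal)
qed

theorem mainTheorem1:
  fixes \<beta> l :: real
  assumes "\<beta> > 1" and "-1 < l" and "l \<le> 0"
  shows "negbeta_Fin \<beta> l \<noteq> {0} \<longleftrightarrow>
    ((l \<le> -1/\<beta> \<and> -1/\<beta> < l + 1) \<or> (l \<le> 1/\<beta> \<and> 1/\<beta> < l + 1))"
proof -
  have "(\<exists>z \<in> {l..<l + 1}. z \<noteq> 0 \<and> negbeta_T \<beta> l z = 0) \<longleftrightarrow>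
      (\<exists>k::int. k \<noteq> 0 \<and> of_int k / \<beta> \<in> {l..<l + 1})"
  proof -
    have "\<beta> \<noteq> 0" using assms(1) by simp
    from negbeta_T_eq_0_iff_int_divide[OF assms(2,3) this] this show ?thesis
      by (metis divide_eq_0_iff of_int_eq_0_iff)
  qed
  also have "\<dots> \<longleftrightarrow> -1/\<beta> \<in> {l..<l + 1} \<or> 1/\<beta> \<in> {l..<l + 1}"
    using ex_nonzero_int_divide_in_interval_iff assms by simp
  finally show ?thesis by (simp add: negbeta_Fin_neq_0_iff[OF assms])
qed

end
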